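(* Let $X$ be a topological space and $f\colon X\to\mathbb{R}^d$ an injective function. Suppose there exists a continuous map $\psi\colon S^1\to X$ such that $\psi(x)\neq\psi(-x)$ for all $x\in S^1$. Then $\alpha(f)=0$ if and only if $f$ is continuous.
   Context: $\mathrm{Conf}_2(X)=\{(x,y)\in X\times X: x\neq y\}$ with the subspace topology. $S^{d-1}$ carries the geodesic metric $d(u,v)=\arccos\langle u,v\rangle$ (for $d=1$, $S^0=\{\pm1\}$ with the two points at distance $\pi$). For a topological space $X$ and a metric space $Y$, $\delta(g)=\inf\{\delta\ge 0 : \text{for every } x\in X \text{ there is an open neighborhood } U_x \text{ of } x \text{ with } \operatorname{diam}(g(U_x))\le\delta\}$. For injective $f\colon X\to\mathbb{R}^d$, $\Phi_f(x,y)=\frac{f(x)-f(y)}{\|f(x)-f(y)\|}$ and $\alpha(f)=\delta(\Phi_f)$. *)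

theory Defs
  imports "HOL-Analysis.Analysis"
begin

definition conf2 :: "'a topology \<Rightarrow> ('a \<times> 'a) topology" where
  "conf2 X = subtopology (prod_topology X X)
     {(x, y). x \<in> topspace X \<and> y \<in> topspace X \<and> x \<noteq> y}"

definition geod_dist :: "'b::euclidean_space \<Rightarrow> 'b \<Rightarrow> real" where
  "geod_dist u v = arccos (inner u v)"

definition diam_wrt :: "('b \<Rightarrow> 'b \<Rightarrow> real) \<Rightarrow> 'b set \<Rightarrow> real" where
  "diam_wrt dd S = Sup {dd u v | u v. u \<in> S \<and> v \<in> S}"

definition delta_wrt :: "'a topology \<Rightarrow> ('b \<Rightarrow> 'b \<Rightarrow> real) \<Rightarrow> ('a \<Rightarrow> 'b) \<Rightarrow> real" where
  "delta_wrt T dd g = Inf {\<delta>. \<delta> \<ge> 0 \<and>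
     (\<forall>p \<in> topspace T. \<exists>U. openin T U \<and> p \<in> U \<and> diam_wrt dd (g ` U) \<le> \<delta>)}"

definition Phi :: "('a \<Rightarrow> 'b::euclidean_space) \<Rightarrow> 'a \<times> 'a \<Rightarrow> 'b" where
  "Phi f = (\<lambda>(x, y). (f x - f y) /\<^sub>R norm (f x - f y))"

definition alpha :: "'a topology \<Rightarrow> ('a \<Rightarrow> 'b::euclidean_space) \<Rightarrow> real" where
  "alpha X f = delta_wrt (conf2 X) geod_dist (Phi f)"

end

theory Submission
  imports Defs
begin

text \<open>
  Small geodesic and small chordal diameters on the unit sphere are the same thing, so
  \<open>\<alpha>(f) = 0\<close> says exactly that \<open>\<Phi>\<^sub>f\<close> is continuous on \<open>Conf\<^sub>2(X)\<close>, and continuity of \<open>f\<close>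
  clearly gives that. Conversely, let \<open>\<Phi>\<^sub>f\<close> be continuous. The loop \<open>\<psi>\<close> prevents \<open>f(X)\<close> from
  lying on a line with direction \<open>e\<close>: otherwise \<open>t \<mapsto> \<Phi>\<^sub>f(\<psi> t, \<psi>(-t)) \<bullet> e\<close> would be a
  continuous odd map from the connected circle to \<open>{-1, 1}\<close>. Hence every \<open>f(x)\<close> is a vertex of
  a nondegenerate triangle \<open>f(x), f(y), f(z)\<close>, and for \<open>u\<close> near \<open>x\<close> the point \<open>f(u)\<close> is
  recovered continuously from the directions \<open>\<Phi>\<^sub>f(u, y)\<close>, \<open>\<Phi>\<^sub>f(u, z)\<close> by intersecting two lines.
\<close>

lemma continuous_map_to_euclidean_iff:
  "continuous_map X euclidean g \<longleftrightarrow>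
    (\<forall>x \<in> topspace X. \<forall>\<epsilon>>0. \<exists>U. openin X U \<and> x \<in> U \<and> (\<forall>y\<in>U. dist (g x) (g y) < \<epsilon>))"
  using Met_TC.continuous_map_to_metric[of X g] by simp

lemma norm_scaleR_sgn: "norm x *\<^sub>R sgn x = x"
  for x :: "'b::real_normed_vector"
  by (cases "x = 0") (simp_all add: sgn_div_norm)

lemma abs_inner_unit_le_1:
  fixes u v :: "'b::euclidean_space"
  assumes "norm u = 1" "norm v = 1"
  shows "\<bar>u \<bullet> v\<bar> \<le> 1"
  using Cauchy_Schwarz_ineq2[of u v] assms by simp

lemma geod_dist_le_pi:
  fixes u v :: "'b::euclidean_space"
  assumes "norm u = 1" "norm v = 1"
  shows "geod_dist u v \<le> pi"
  using arccos_bounded abs_inner_unit_le_1[OF assms] by (auto simp: geod_dist_def abs_le_iff)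

lemma norm_diff_unit_sq:
  fixes u v :: "'b::euclidean_space"
  assumes "norm u = 1" "norm v = 1"
  shows "(norm (u - v))\<^sup>2 = 2 - 2 * (u \<bullet> v)"
proof -
  have "(norm (u - v))\<^sup>2 = u \<bullet> u + v \<bullet> v - 2 * (u \<bullet> v)"
    by (simp add: power2_norm_eq_inner inner_diff_left inner_diff_right inner_commute)
  then show ?thesis using assms by (simp add: dot_square_norm)
qed

lemma geod_dist_le_iff_norm_diff:
  fixes u v :: "'b::euclidean_space"
  assumes "norm u = 1" "norm v = 1" "0 \<le> \<theta>" "\<theta> \<le> pi"
  shows "geod_dist u v \<le> \<theta> \<longleftrightarrow> (norm (u - v))\<^sup>2 \<le> 2 - 2 * cos \<theta>"
proof -
  have "geod_dist u v \<le> \<theta> \<longleftrightarrow> arccos (u \<bullet> v) \<le> arccos (cos \<theta>)"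
    using arccos_cos[OF assms(3,4)] by (simp add: geod_dist_def)
  also have "\<dots> \<longleftrightarrow> cos \<theta> \<le> u \<bullet> v"
    using abs_inner_unit_le_1[OF assms(1,2)] by (simp add: arccos_le_mono)
  finally show ?thesis using norm_diff_unit_sq[OF assms(1,2)] by linarith
qed

lemma geod_dist_small_imp_norm_diff_small:
  assumes "\<epsilon> > 0"
  shows "\<exists>\<theta>>0. \<forall>u v :: 'b::euclidean_space. norm u = 1 \<longrightarrow> norm v = 1 \<longrightarrow>
           geod_dist u v \<le> \<theta> \<longrightarrow> norm (u - v) < \<epsilon>"
proof -
  define c where "c = max (1 - \<epsilon>\<^sup>2 / 4) 0"
  have "\<epsilon>\<^sup>2 > 0" using assms by simp
  then have c: "0 \<le> c" "c < 1" "2 - 2 * c < \<epsilon>\<^sup>2" by (auto simp: c_def max_def)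
  define \<theta> where "\<theta> = arccos c"
  have \<theta>: "0 < \<theta>" "\<theta> \<le> pi" "cos \<theta> = c"
    using c arccos_lt_bounded[of c] by (auto simp: \<theta>_def)
  have "norm (u - v) < \<epsilon>" if "norm u = 1" "norm v = 1" "geod_dist u v \<le> \<theta>" for u v :: 'b
  proof -
    have "(norm (u - v))\<^sup>2 < \<epsilon>\<^sup>2"
      using geod_dist_le_iff_norm_diff[OF that(1,2), of \<theta>] that(3) \<theta> c by simp
    then show ?thesis using assms by (simp add: power_less_imp_less_base)
  qed
  then show ?thesis using \<theta>(1) by blast
qed

lemma norm_diff_small_imp_geod_dist_small:
  assumes "\<delta> > 0"
  shows "\<exists>\<eta>>0. \<forall>u v :: 'b::euclidean_space. norm u = 1 \<longrightarrow> norm v = 1 \<longrightarrow>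
           norm (u - v) < \<eta> \<longrightarrow> geod_dist u v \<le> \<delta>"
proof -
  define \<theta> where "\<theta> = min \<delta> pi"
  have \<theta>: "0 < \<theta>" "\<theta> \<le> pi" "\<theta> \<le> \<delta>" using assms by (auto simp: \<theta>_def)
  then have "cos \<theta> < 1" using cos_monotone_0_pi[of 0 \<theta>] by simp
  define \<eta> where "\<eta> = sqrt (2 - 2 * cos \<theta>)"
  have "geod_dist u v \<le> \<delta>" if "norm u = 1" "norm v = 1" "norm (u - v) < \<eta>" for u v :: 'b
  proof -
    have "(norm (u - v))\<^sup>2 < \<eta>\<^sup>2" using that(3) by (simp add: power_strict_mono)
    then have "geod_dist u v \<le> \<theta>"
      using geod_dist_le_iff_norm_diff[OF that(1,2), of \<theta>] \<theta> \<open>cos \<theta> < 1\<close> by (simp add: \<eta>_def)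
    then show ?thesis using \<theta>(3) by linarith
  qed
  moreover have "\<eta> > 0" using \<open>cos \<theta> < 1\<close> by (simp add: \<eta>_def)
  ultimately show ?thesis by blast
qed

lemma diam_wrt_geod_dist_le_iff:
  fixes S :: "'b::euclidean_space set"
  assumes "S \<subseteq> sphere 0 1" "S \<noteq> {}"
  shows "diam_wrt geod_dist S \<le> \<delta> \<longleftrightarrow> (\<forall>u\<in>S. \<forall>v\<in>S. geod_dist u v \<le> \<delta>)"
proof -
  have "bdd_above {geod_dist u v | u v. u \<in> S \<and> v \<in> S}"
    using assms(1) geod_dist_le_pi unfolding bdd_above_def by fastforce
  then show ?thesis using assms(2) unfolding diam_wrt_def by (subst cSup_le_iff) auto
qed

lemma delta_wrt_eq_0_iff:
  assumes "0 \<le> \<delta>\<^sub>0"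
    and "\<forall>p \<in> topspace T. \<exists>U. openin T U \<and> p \<in> U \<and> diam_wrt dd (g ` U) \<le> \<delta>\<^sub>0"
  shows "delta_wrt T dd g = 0 \<longleftrightarrow>
    (\<forall>\<delta>>0. \<forall>p \<in> topspace T. \<exists>U. openin T U \<and> p \<in> U \<and> diam_wrt dd (g ` U) \<le> \<delta>)"
proof -
  define D where "D = {\<delta>. \<delta> \<ge> 0 \<and>
     (\<forall>p \<in> topspace T. \<exists>U. openin T U \<and> p \<in> U \<and> diam_wrt dd (g ` U) \<le> \<delta>)}"
  have upward_closed: "\<delta>' \<in> D" if "\<delta> \<in> D" "\<delta> \<le> \<delta>'" for \<delta> \<delta>'
    using that unfolding D_def by (fastforce intro: order_trans)
  have "\<delta>\<^sub>0 \<in> D" using assms by (auto simp: D_def)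
  then have "D \<noteq> {}" by blast
  have "bdd_below D" unfolding D_def bdd_below_def by auto
  have "Inf D = 0 \<longleftrightarrow> (\<forall>\<delta>>0. \<delta> \<in> D)"
  proof
    assume "Inf D = 0"
    show "\<forall>\<delta>>0. \<delta> \<in> D"
    proof (intro allI impI)
      fix \<delta> :: real assume "\<delta> > 0"
      then obtain \<delta>' where "\<delta>' \<in> D" "\<delta>' < \<delta>"
        using cInf_less_iff[OF \<open>D \<noteq> {}\<close> \<open>bdd_below D\<close>] \<open>Inf D = 0\<close> by auto
      then show "\<delta> \<in> D" using upward_closed by simp
    qed
  next
    assume "\<forall>\<delta>>0. \<delta> \<in> D"
    then have "Inf D \<le> 0" using cInf_lower[OF _ \<open>bdd_below D\<close>] by (auto intro: dense_ge)
    moreover have "0 \<le> Inf D" using \<open>D \<noteq> {}\<close> by (intro cInf_greatest) (auto simp: D_def)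
    ultimately show "Inf D = 0" by simp
  qed
  moreover have "delta_wrt T dd g = Inf D" by (simp add: delta_wrt_def D_def)
  ultimately show ?thesis by (simp add: D_def)
qed

lemma locally_small_geod_diam_iff_continuous_map:
  fixes g :: "'a \<Rightarrow> 'b::euclidean_space"
  assumes g: "g \<in> topspace T \<rightarrow> sphere 0 1"
  shows "(\<forall>\<delta>>0. \<forall>p \<in> topspace T. \<exists>U. openin T U \<and> p \<in> U \<and>
            (\<forall>q\<in>U. \<forall>r\<in>U. geod_dist (g q) (g r) \<le> \<delta>)) \<longleftrightarrow> continuous_map T euclidean g"
  unfolding continuous_map_to_euclidean_iff
proof (intro iffI ballI allI impI)
  have unit: "norm (g q) = 1" if "q \<in> topspace T" for q
    using g that by auto
  {
    fix p and \<epsilon> :: real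
    assume small_geod: "\<forall>\<delta>>0. \<forall>p \<in> topspace T. \<exists>U. openin T U \<and> p \<in> U \<and>
                          (\<forall>q\<in>U. \<forall>r\<in>U. geod_dist (g q) (g r) \<le> \<delta>)"
      and "p \<in> topspace T" "\<epsilon> > 0"
    obtain \<theta> where "\<theta> > 0" and \<theta>: "\<And>u v :: 'b. norm u = 1 \<Longrightarrow> norm v = 1 \<Longrightarrow>
        geod_dist u v \<le> \<theta> \<Longrightarrow> norm (u - v) < \<epsilon>"
      using geod_dist_small_imp_norm_diff_small[OF \<open>\<epsilon> > 0\<close>] by blast
    obtain U where U: "openin T U" "p \<in> U" "\<forall>q\<in>U. \<forall>r\<in>U. geod_dist (g q) (g r) \<le> \<theta>"
      using small_geod[rule_format, OF \<open>\<theta> > 0\<close> \<open>p \<in> topspace T\<close>] by blast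
    have "dist (g p) (g q) < \<epsilon>" if "q \<in> U" for q
    proof -
      have "p \<in> topspace T" "q \<in> topspace T" using U(2) that openin_subset[OF U(1)] by auto
      then show ?thesis using \<theta>[OF unit unit] U(2,3) that by (simp add: dist_norm)
    qed
    then show "\<exists>U. openin T U \<and> p \<in> U \<and> (\<forall>q\<in>U. dist (g p) (g q) < \<epsilon>)"
      using U by blast
  next
    fix \<delta> :: real and p
    assume small_dist: "\<forall>p \<in> topspace T. \<forall>\<epsilon>>0. \<exists>U. openin T U \<and> p \<in> U \<and>
                          (\<forall>q\<in>U. dist (g p) (g q) < \<epsilon>)"
      and "\<delta> > 0" "p \<in> topspace T"
    obtain \<eta> where "\<eta> > 0" and \<eta>: "\<And>u v :: 'b. norm u = 1 \<Longrightarrow> norm v = 1 \<Longrightarrow>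
        norm (u - v) < \<eta> \<Longrightarrow> geod_dist u v \<le> \<delta>"
      using norm_diff_small_imp_geod_dist_small[OF \<open>\<delta> > 0\<close>] by blast
    obtain U where U: "openin T U" "p \<in> U" "\<forall>q\<in>U. dist (g p) (g q) < \<eta> / 2"
      using small_dist[rule_format, OF \<open>p \<in> topspace T\<close>, of "\<eta> / 2"] \<open>\<eta> > 0\<close> by auto
    have "geod_dist (g q) (g r) \<le> \<delta>" if "q \<in> U" "r \<in> U" for q r
    proof -
      have "dist (g q) (g r) < \<eta>"
        using dist_triangle_half_r[of "g p" "g q" \<eta> "g r"] U(3) that by blast
      moreover have "q \<in> topspace T" "r \<in> topspace T" using that openin_subset[OF U(1)] by auto
      ultimately show ?thesis using \<eta>[OF unit unit] by (simp add: dist_norm)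
    qed
    then show "\<exists>U. openin T U \<and> p \<in> U \<and> (\<forall>q\<in>U. \<forall>r\<in>U. geod_dist (g q) (g r) \<le> \<delta>)"
      using U by blast
  }
qed

lemma delta_wrt_geod_dist_eq_0_iff:
  fixes g :: "'a \<Rightarrow> 'b::euclidean_space"
  assumes g: "g \<in> topspace T \<rightarrow> sphere 0 1"
  shows "delta_wrt T geod_dist g = 0 \<longleftrightarrow> continuous_map T euclidean g"
proof -
  have diam_iff: "openin T U \<and> p \<in> U \<and> diam_wrt geod_dist (g ` U) \<le> \<delta> \<longleftrightarrow>
      openin T U \<and> p \<in> U \<and> (\<forall>q\<in>U. \<forall>r\<in>U. geod_dist (g q) (g r) \<le> \<delta>)" for U p \<delta>
  proof (cases "openin T U \<and> p \<in> U")
    case True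
    then have "g ` U \<subseteq> sphere 0 1" "g ` U \<noteq> {}" using openin_subset g by fastforce+
    then show ?thesis using True by (simp add: diam_wrt_geod_dist_le_iff)
  qed auto
  have "\<forall>p \<in> topspace T. \<exists>U. openin T U \<and> p \<in> U \<and> diam_wrt geod_dist (g ` U) \<le> pi"
  proof
    fix p assume "p \<in> topspace T"
    moreover have "\<forall>q\<in>topspace T. \<forall>r\<in>topspace T. geod_dist (g q) (g r) \<le> pi"
      using g geod_dist_le_pi by fastforce
    ultimately show "\<exists>U. openin T U \<and> p \<in> U \<and> diam_wrt geod_dist (g ` U) \<le> pi"
      using diam_iff[of "topspace T" p pi] by blast
  qed
  then have "delta_wrt T geod_dist g = 0 \<longleftrightarrow>
    (\<forall>\<delta>>0. \<forall>p \<in> topspace T. \<exists>U. openin T U \<and> p \<in> U \<and> diam_wrt geod_dist (g ` U) \<le> \<delta>)"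
    by (intro delta_wrt_eq_0_iff) simp_all
  also have "\<dots> \<longleftrightarrow> continuous_map T euclidean g"
    unfolding diam_iff by (rule locally_small_geod_diam_iff_continuous_map[OF g])
  finally show ?thesis .
qed

lemma Phi_eq_sgn: "Phi f (x, y) = sgn (f x - f y)"
  by (simp add: Phi_def sgn_div_norm)

lemma Phi_swap: "Phi f (y, x) = - Phi f (x, y)"
  by (metis Phi_eq_sgn minus_diff_eq sgn_minus)

lemma topspace_conf2:
  "topspace (conf2 X) = {(x, y). x \<in> topspace X \<and> y \<in> topspace X \<and> x \<noteq> y}"
  by (auto simp: conf2_def topspace_subtopology)

lemma Phi_in_sphere:
  assumes "inj_on f (topspace X)"
  shows "Phi f \<in> topspace (conf2 X) \<rightarrow> sphere 0 1"
  using assms by (auto simp: topspace_conf2 Phi_eq_sgn norm_sgn dest: inj_onD)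

lemma alpha_eq_0_iff_continuous_Phi:
  assumes "inj_on f (topspace X)"
  shows "alpha X f = 0 \<longleftrightarrow> continuous_map (conf2 X) euclidean (Phi f)"
  unfolding alpha_def by (rule delta_wrt_geod_dist_eq_0_iff[OF Phi_in_sphere[OF assms]])

lemma continuous_map_Phi:
  assumes inj: "inj_on f (topspace X)" and f: "continuous_map X euclidean f"
  shows "continuous_map (conf2 X) euclidean (Phi f)"
proof -
  have "continuous_map (conf2 X) euclidean (f \<circ> fst)" "continuous_map (conf2 X) euclidean (f \<circ> snd)"
    unfolding conf2_def
    by (intro continuous_map_compose[OF continuous_map_from_subtopology f]
        continuous_map_fst continuous_map_snd)+
  then have diff: "continuous_map (conf2 X) euclidean (\<lambda>q. f (fst q) - f (snd q))"
    by (simp add: continuous_map_diff o_def)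
  have "f (fst q) - f (snd q) \<noteq> 0" if "q \<in> topspace (conf2 X)" for q
    using that inj by (auto simp: topspace_conf2 dest: inj_onD)
  moreover have "Phi f = (\<lambda>q. sgn (f (fst q) - f (snd q)))"
    by (auto simp: Phi_eq_sgn)
  ultimately show ?thesis
    using diff unfolding continuous_map_atin by (auto intro: tendsto_sgn)
qed

lemma connected_odd_function_has_zero:
  fixes k :: "'b::real_normed_vector \<Rightarrow> real"
  assumes "connected S" "continuous_on S k" "t \<in> S" "- t \<in> S" "k (- t) = - k t"
  shows "\<exists>s\<in>S. k s = 0"
proof -
  have ivt: "z \<in> k ` S" if "x \<in> k ` S" "y \<in> k ` S" "x \<le> z" "z \<le> y" for x y z
    using connected_continuous_image[OF assms(2,1)] that unfolding connected_iff_interval by blast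
  have "k t \<in> k ` S" "k (- t) \<in> k ` S" using assms(3,4) by auto
  then have "0 \<in> k ` S"
    using ivt[of "k t" "k (- t)" 0] ivt[of "k (- t)" "k t" 0] assms(5) by linarith
  then show ?thesis by auto
qed

lemma continuous_map_antipodal_pair:
  fixes \<psi> :: "'n::euclidean_space \<Rightarrow> 'a"
  assumes \<psi>: "continuous_map (top_of_set (sphere 0 1)) X \<psi>"
    and antipodal: "\<forall>t \<in> sphere 0 1. \<psi> t \<noteq> \<psi> (- t)"
  shows "continuous_map (top_of_set (sphere 0 1)) (conf2 X) (\<lambda>t. (\<psi> t, \<psi> (- t)))"
proof -
  have "continuous_map (top_of_set (sphere 0 1)) (top_of_set (sphere (0::'n) 1)) uminus"
    by (auto simp: continuous_map_in_subtopology continuous_on_minus continuous_on_id)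
  from continuous_map_compose[OF this \<psi>]
  have "continuous_map (top_of_set (sphere 0 1)) X (\<lambda>t. \<psi> (- t))"
    by (simp add: o_def)
  then have "continuous_map (top_of_set (sphere 0 1)) (prod_topology X X) (\<lambda>t. (\<psi> t, \<psi> (- t)))"
    using \<psi> by (simp add: continuous_map_paired)
  moreover have "(\<lambda>t. (\<psi> t, \<psi> (- t))) ` sphere 0 1 \<subseteq> topspace (conf2 X)"
    using \<psi> antipodal by (auto simp: topspace_conf2 continuous_map_def)
  ultimately show ?thesis
    unfolding conf2_def by (simp add: continuous_map_in_subtopology image_subset_iff_funcset)
qed

lemma not_collinear_image_if_antipodal_loop:
  fixes f :: "'a \<Rightarrow> 'b::euclidean_space" and \<psi> :: "real^2 \<Rightarrow> 'a"
  assumes inj: "inj_on f (topspace X)"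
    and Phi: "continuous_map (conf2 X) euclidean (Phi f)"
    and \<psi>: "continuous_map (top_of_set (sphere 0 1)) X \<psi>"
    and antipodal: "\<forall>t \<in> sphere 0 1. \<psi> t \<noteq> \<psi> (- t)"
  shows "\<not> collinear (f ` topspace X)"
proof
  assume "collinear (f ` topspace X)"
  then obtain u where u: "\<And>p q. p \<in> topspace X \<Longrightarrow> q \<in> topspace X \<Longrightarrow> \<exists>c. f p - f q = c *\<^sub>R u"
    unfolding collinear_def by blast
  have Phi_dir: "Phi f (p, q) \<bullet> sgn u \<in> {-1, 1}"
    if pq: "p \<in> topspace X" "q \<in> topspace X" "p \<noteq> q" for p q
  proof -
    obtain c where c: "f p - f q = c *\<^sub>R u" using u pq(1,2) by blast
    have "f p \<noteq> f q" using inj pq by (auto dest: inj_onD)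
    then have "c \<noteq> 0" "u \<noteq> 0" using c by auto
    then have "sgn u \<bullet> sgn u = 1" by (simp add: dot_square_norm norm_sgn)
    then show ?thesis using \<open>c \<noteq> 0\<close> by (simp add: Phi_eq_sgn c sgn_scaleR sgn_if)
  qed
  define k where "k t = Phi f (\<psi> t, \<psi> (- t)) \<bullet> sgn u" for t
  from continuous_map_compose[OF continuous_map_antipodal_pair[OF \<psi> antipodal] Phi]
  have "continuous_on (sphere 0 1) k"
    unfolding k_def by (intro continuous_intros) (simp add: o_def)
  moreover obtain t :: "real^2" where "t \<in> sphere 0 1"
    using sphere_eq_empty[of "0::real^2" 1] by fastforce
  moreover have "k (- t) = - k t"
    using Phi_swap[of f "\<psi> t" "\<psi> (- t)"] by (simp add: k_def)
  ultimately obtain s where s: "s \<in> sphere 0 1" "k s = 0"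
    using connected_odd_function_has_zero[of "sphere 0 1" k t] connected_sphere[of "0::real^2" 1]
    by auto
  have "\<psi> s \<in> topspace X" "\<psi> (- s) \<in> topspace X"
    using \<psi> s(1) by (auto simp: continuous_map_def)
  then have "k s \<in> {-1, 1}"
    unfolding k_def using s(1) antipodal by (intro Phi_dir) auto
  with s(2) show False by simp
qed

lemma not_collinear_imp_triple:
  fixes S :: "'b::euclidean_space set"
  assumes "\<not> collinear S" "a \<in> S"
  shows "\<exists>b\<in>S. \<exists>c\<in>S. \<not> collinear {a, b, c}"
proof -
  have "\<not> S \<subseteq> {a}" using assms(1) collinear_subset collinear_sing by blast
  then obtain b where "b \<in> S" "b \<noteq> a" by blast
  then have "insert a (insert b S) = S" using assms(2) by blast
  then show ?thesis
    using collinear_triples[of a b S] \<open>b \<noteq> a\<close> \<open>b \<in> S\<close> assms(1) by auto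
qed

lemma collinear_if_sgn_diff_eq:
  fixes a b c :: "'b::euclidean_space"
  assumes "sgn (c - b) = sgn (a - b)"
  shows "collinear {a, b, c}"
proof -
  have "\<exists>r. a = b + r *\<^sub>R sgn (a - b)"
    using norm_scaleR_sgn[of "a - b"] by (metis add.commute diff_add_cancel)
  moreover have "\<exists>r. c = b + r *\<^sub>R sgn (a - b)"
    using norm_scaleR_sgn[of "c - b"] assms by (metis add.commute diff_add_cancel)
  moreover have "\<exists>r. b = b + r *\<^sub>R sgn (a - b)"
    by (metis add_0_right scaleR_zero_left)
  ultimately show ?thesis unfolding collinear_alt by blast
qed

lemma inner_sgn_diff_sq_lt_1:
  fixes a b c :: "'b::euclidean_space"
  assumes "\<not> collinear {a, b, c}"
  shows "(sgn (a - b) \<bullet> sgn (a - c))\<^sup>2 < 1"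
proof -
  define u v where "u = sgn (a - b)" and "v = sgn (a - c)"
  have "a \<noteq> b" "a \<noteq> c" using assms by (auto simp: insert_commute)
  then have unit: "norm u = 1" "norm v = 1" by (simp_all add: u_def v_def norm_sgn)
  have "\<bar>u \<bullet> v\<bar> \<noteq> 1"
  proof
    assume "\<bar>u \<bullet> v\<bar> = 1"
    then have "v = u \<or> v = - u" using norm_cauchy_schwarz_abs_eq[of u v] unit by simp
    then obtain s where s: "v = s *\<^sub>R u" by (metis scaleR_one scaleR_minus1_left)
    have "\<exists>r. a = a + r *\<^sub>R u"
      by (metis add_0_right scaleR_zero_left)
    moreover have "b = a + (- norm (a - b)) *\<^sub>R u"
      by (simp add: u_def norm_scaleR_sgn)
    moreover have "(norm (a - c) * s) *\<^sub>R u = a - c"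
      using norm_scaleR_sgn[of "a - c"] by (simp add: s flip: v_def)
    then have "c = a + (- (norm (a - c) * s)) *\<^sub>R u"
      by simp
    ultimately have "collinear {a, b, c}" unfolding collinear_alt by blast
    with assms show False ..
  qed
  moreover have "\<bar>u \<bullet> v\<bar> \<le> 1" using abs_inner_unit_le_1[OF unit] .
  ultimately show ?thesis by (simp add: u_def v_def abs_square_less_1)
qed

text \<open>Writing \<open>p = b + s v = c + t w\<close> with unit vectors \<open>v, w\<close> and taking inner products
  with \<open>v\<close> and \<open>w\<close> gives a \<open>2 \<times> 2\<close> linear system for \<open>s, t\<close>; solve it for \<open>s\<close>.\<close>

lemma point_eq_from_directions:
  fixes b c p :: "'b::euclidean_space"
  assumes "p \<noteq> b" "p \<noteq> c" "(sgn (p - b) \<bullet> sgn (p - c))\<^sup>2 \<noteq> 1"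
  shows "p = b + (((c - b) \<bullet> sgn (p - b) - (sgn (p - b) \<bullet> sgn (p - c)) * ((c - b) \<bullet> sgn (p - c)))
                  / (1 - (sgn (p - b) \<bullet> sgn (p - c))\<^sup>2)) *\<^sub>R sgn (p - b)"
proof -
  define v w where "v = sgn (p - b)" and "w = sgn (p - c)"
  define s t where "s = norm (p - b)" and "t = norm (p - c)"
  have v1: "v \<bullet> v = 1" and w1: "w \<bullet> w = 1"
    using assms by (simp_all add: v_def w_def dot_square_norm norm_sgn)
  have pv: "p - b = s *\<^sub>R v" and pw: "p - c = t *\<^sub>R w"
    by (simp_all add: v_def w_def s_def t_def norm_scaleR_sgn)
  then have "c - b = s *\<^sub>R v - t *\<^sub>R w"
    by (metis diff_diff_eq2 diff_diff_cancel diff_add_cancel add_diff_cancel_left' eq_diff_eq)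
  then have cb_v: "(c - b) \<bullet> v = s - t * (v \<bullet> w)" and cb_w: "(c - b) \<bullet> w = s * (v \<bullet> w) - t"
    using v1 w1 by (simp_all add: inner_diff_left inner_commute[of w v])
  have "1 - (v \<bullet> w)\<^sup>2 \<noteq> 0" using assms(3) by (simp add: v_def w_def)
  then have "((c - b) \<bullet> v - (v \<bullet> w) * ((c - b) \<bullet> w)) / (1 - (v \<bullet> w)\<^sup>2) = s"
    by (simp add: cb_v cb_w field_simps power2_eq_square)
  then show ?thesis using pv unfolding v_def [symmetric] w_def [symmetric]
    by (metis add.commute diff_add_cancel)
qed

lemma point_near_if_directions_near:
  fixes a b c :: "'b::euclidean_space"
  assumes "\<not> collinear {a, b, c}" "\<epsilon> > 0"
  shows "\<exists>\<eta>>0. \<forall>p. p \<noteq> b \<longrightarrow> p \<noteq> c \<longrightarrow> norm (sgn (p - b) - sgn (a - b)) < \<eta> \<longrightarrow>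
            norm (sgn (p - c) - sgn (a - c)) < \<eta> \<longrightarrow> norm (p - a) < \<epsilon>"
proof -
  define F where "F q = b + (((c - b) \<bullet> fst q - (fst q \<bullet> snd q) * ((c - b) \<bullet> snd q))
                  / (1 - (fst q \<bullet> snd q)\<^sup>2)) *\<^sub>R fst q" for q :: "'b \<times> 'b"
  define G where "G q = (fst q \<bullet> snd q)\<^sup>2" for q :: "'b \<times> 'b"
  define q\<^sub>0 where "q\<^sub>0 = (sgn (a - b), sgn (a - c))"
  have "a \<noteq> b" "a \<noteq> c" using assms(1) by (auto simp: insert_commute)
  have G0: "G q\<^sub>0 < 1" using inner_sgn_diff_sq_lt_1[OF assms(1)] by (simp add: G_def q\<^sub>0_def)
  have "continuous (at q\<^sub>0) F" unfolding F_def using G0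
    by (intro continuous_intros) (auto simp: G_def)
  then obtain d\<^sub>1 where "d\<^sub>1 > 0" and d\<^sub>1: "\<And>q. dist q q\<^sub>0 < d\<^sub>1 \<Longrightarrow> dist (F q) (F q\<^sub>0) < \<epsilon>"
    using assms(2) unfolding continuous_at_eps_delta by blast
  have "continuous (at q\<^sub>0) G" unfolding G_def by (intro continuous_intros)
  then obtain d\<^sub>2 where "d\<^sub>2 > 0" and d\<^sub>2: "\<And>q. dist q q\<^sub>0 < d\<^sub>2 \<Longrightarrow> dist (G q) (G q\<^sub>0) < 1 - G q\<^sub>0"
    using G0 unfolding continuous_at_eps_delta by (metis diff_gt_0_iff_gt)
  have Fa: "F q\<^sub>0 = a"
    using point_eq_from_directions[of a b c] \<open>a \<noteq> b\<close> \<open>a \<noteq> c\<close> G0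
    by (simp add: F_def G_def q\<^sub>0_def)
  have "norm (p - a) < \<epsilon>"
    if "p \<noteq> b" "p \<noteq> c" "norm (sgn (p - b) - sgn (a - b)) < min d\<^sub>1 d\<^sub>2 / 2"
       "norm (sgn (p - c) - sgn (a - c)) < min d\<^sub>1 d\<^sub>2 / 2" for p
  proof -
    define q where "q = (sgn (p - b), sgn (p - c))"
    have "dist q q\<^sub>0 \<le> dist (sgn (p - b)) (sgn (a - b)) + dist (sgn (p - c)) (sgn (a - c))"
      unfolding q_def q\<^sub>0_def dist_Pair_Pair by (intro sqrt_sum_squares_le_sum zero_le_dist)
    then have close: "dist q q\<^sub>0 < min d\<^sub>1 d\<^sub>2" using that(3,4) by (simp add: dist_norm)
    then have "G q < 1" using d\<^sub>2[of q] by (simp add: dist_real_def)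
    then have "p = F q"
      using point_eq_from_directions[of p b c] that(1,2) by (simp add: F_def G_def q_def)
    then show ?thesis using d\<^sub>1[of q] close Fa by (simp add: dist_norm)
  qed
  moreover have "min d\<^sub>1 d\<^sub>2 / 2 > 0" using \<open>d\<^sub>1 > 0\<close> \<open>d\<^sub>2 > 0\<close> by simp
  ultimately show ?thesis by blast
qed

lemma nbhd_with_near_directions:
  assumes Phi: "continuous_map (conf2 X) euclidean (Phi f)"
    and x: "x \<in> topspace X" and y: "y \<in> topspace X" "x \<noteq> y" and "\<eta> > 0"
  obtains V where "openin X V" "x \<in> V"
    "\<And>u. u \<in> V \<Longrightarrow> u \<noteq> y \<Longrightarrow> norm (sgn (f u - f y) - sgn (f x - f y)) < \<eta>"
proof -
  define Y where "Y = subtopology X (topspace X - {y})"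
  have "continuous_map Y (prod_topology X X) (\<lambda>u. (u, y))"
    using y unfolding Y_def
    by (simp add: continuous_map_paired continuous_map_from_subtopology)
  then have "continuous_map Y (conf2 X) (\<lambda>u. (u, y))"
    using y unfolding conf2_def Y_def by (auto simp: continuous_map_in_subtopology)
  from continuous_map_compose[OF this Phi]
  have "continuous_map Y euclidean (\<lambda>u. Phi f (u, y))"
    by (simp add: o_def)
  moreover have "x \<in> topspace Y" using x y by (simp add: Y_def)
  ultimately obtain W where W: "openin Y W" "x \<in> W" "\<forall>u\<in>W. dist (Phi f (x, y)) (Phi f (u, y)) < \<eta>"
    using \<open>\<eta> > 0\<close> unfolding continuous_map_to_euclidean_iff by blast
  then obtain V where V: "openin X V" "W = V \<inter> (topspace X - {y})"
    unfolding Y_def openin_subtopology by blast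
  show ?thesis
  proof (rule that[OF V(1)])
    show "x \<in> V" using W(2) V(2) by blast
    fix u assume "u \<in> V" "u \<noteq> y"
    then have "u \<in> W" using V openin_subset by blast
    then show "norm (sgn (f u - f y) - sgn (f x - f y)) < \<eta>"
      using W(3) by (simp add: Phi_eq_sgn dist_norm norm_minus_commute)
  qed
qed

lemma nbhd_with_near_directions_avoiding:
  assumes Phi: "continuous_map (conf2 X) euclidean (Phi f)"
    and x: "x \<in> topspace X" and y: "y \<in> topspace X" "x \<noteq> y" "z \<noteq> y" and "\<eta> > 0"
    and gap: "sgn (f z - f y) \<noteq> sgn (f x - f y)"
  obtains V where "openin X V" "x \<in> V" "z \<notin> V"
    "\<And>u. u \<in> V \<Longrightarrow> u \<noteq> y \<Longrightarrow> norm (sgn (f u - f y) - sgn (f x - f y)) < \<eta>"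
proof -
  define \<eta>' where "\<eta>' = min \<eta> (norm (sgn (f z - f y) - sgn (f x - f y)))"
  have "\<eta>' > 0" "\<eta>' \<le> \<eta>" using \<open>\<eta> > 0\<close> gap by (auto simp: \<eta>'_def)
  then obtain V where V: "openin X V" "x \<in> V"
    "\<And>u. u \<in> V \<Longrightarrow> u \<noteq> y \<Longrightarrow> norm (sgn (f u - f y) - sgn (f x - f y)) < \<eta>'"
    using nbhd_with_near_directions[OF Phi x y(1,2)] by blast
  moreover have "z \<notin> V" using V(3)[of z] \<open>z \<noteq> y\<close> by (force simp: \<eta>'_def)
  ultimately show ?thesis using that \<open>\<eta>' \<le> \<eta>\<close> by (meson less_le_trans)
qed

lemma continuous_map_if_continuous_Phi:
  fixes f :: "'a \<Rightarrow> 'b::euclidean_space"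
  assumes inj: "inj_on f (topspace X)"
    and Phi: "continuous_map (conf2 X) euclidean (Phi f)"
    and not_collinear: "\<not> collinear (f ` topspace X)"
  shows "continuous_map X euclidean f"
  unfolding continuous_map_to_euclidean_iff
proof (intro ballI allI impI)
  fix x and \<epsilon> :: real
  assume x: "x \<in> topspace X" and "\<epsilon> > 0"
  obtain y z where y: "y \<in> topspace X" and z: "z \<in> topspace X"
    and triangle: "\<not> collinear {f x, f y, f z}"
    using not_collinear_imp_triple[OF not_collinear] x by blast
  then have "x \<noteq> y" "x \<noteq> z" "y \<noteq> z" by (auto simp: insert_commute)
  obtain \<eta> where "\<eta> > 0" and near: "\<And>p. p \<noteq> f y \<Longrightarrow> p \<noteq> f z \<Longrightarrow>
      norm (sgn (p - f y) - sgn (f x - f y)) < \<eta> \<Longrightarrow>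
      norm (sgn (p - f z) - sgn (f x - f z)) < \<eta> \<Longrightarrow> norm (p - f x) < \<epsilon>"
    using point_near_if_directions_near[OF triangle \<open>\<epsilon> > 0\<close>] by blast
  have "sgn (f z - f y) \<noteq> sgn (f x - f y)" "sgn (f y - f z) \<noteq> sgn (f x - f z)"
    using triangle collinear_if_sgn_diff_eq[of "f z" "f y" "f x"]
      collinear_if_sgn_diff_eq[of "f y" "f z" "f x"] by (auto simp: insert_commute)
  then obtain V W where V: "openin X V" "x \<in> V" "z \<notin> V"
      "\<And>u. u \<in> V \<Longrightarrow> u \<noteq> y \<Longrightarrow> norm (sgn (f u - f y) - sgn (f x - f y)) < \<eta>"
    and W: "openin X W" "x \<in> W" "y \<notin> W"
      "\<And>u. u \<in> W \<Longrightarrow> u \<noteq> z \<Longrightarrow> norm (sgn (f u - f z) - sgn (f x - f z)) < \<eta>"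
    using nbhd_with_near_directions_avoiding[OF Phi x y \<open>x \<noteq> y\<close> _ \<open>\<eta> > 0\<close>, of z]
      nbhd_with_near_directions_avoiding[OF Phi x z \<open>x \<noteq> z\<close> _ \<open>\<eta> > 0\<close>, of y] \<open>y \<noteq> z\<close>
    by metis
  have "dist (f x) (f u) < \<epsilon>" if "u \<in> V \<inter> W" for u
  proof -
    have "u \<in> topspace X" "u \<noteq> y" "u \<noteq> z"
      using that openin_subset[OF V(1)] V(3) W(3) by auto
    then have "f u \<noteq> f y" "f u \<noteq> f z" using inj y z by (auto dest: inj_onD)
    then show ?thesis
      using near V(4) W(4) that \<open>u \<noteq> y\<close> \<open>u \<noteq> z\<close> by (simp add: dist_norm norm_minus_commute)
  qed
  then show "\<exists>U. openin X U \<and> x \<in> U \<and> (\<forall>u\<in>U. dist (f x) (f u) < \<epsilon>)"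
    using V(1,2) W(1,2) by (intro exI[of _ "V \<inter> W"]) auto
qed

theorem corollary3p8:
  fixes X :: "'a topology" and f :: "'a \<Rightarrow> 'b::euclidean_space"
    and \<psi> :: "real^2 \<Rightarrow> 'a"
  assumes "inj_on f (topspace X)"
    and "continuous_map (top_of_set (sphere 0 1)) X \<psi>"
    and "\<forall>x \<in> sphere 0 1. \<psi> x \<noteq> \<psi> (- x)"
  shows "alpha X f = 0 \<longleftrightarrow> continuous_map X euclidean f"
proof
  assume "alpha X f = 0"
  then have Phi: "continuous_map (conf2 X) euclidean (Phi f)"
    using alpha_eq_0_iff_continuous_Phi[OF assms(1)] by simp
  then have "\<not> collinear (f ` topspace X)"
    using not_collinear_image_if_antipodal_loop[OF assms(1) _ assms(2,3)] by blast
  then show "continuous_map X euclidean f"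
    using continuous_map_if_continuous_Phi[OF assms(1) Phi] by blast
next
  assume "continuous_map X euclidean f"
  then show "alpha X f = 0"
    using alpha_eq_0_iff_continuous_Phi[OF assms(1)] continuous_map_Phi[OF assms(1)] by simp
qed

end
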